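(* Let $\mathbb{M}\subset\mathbb{T}^d$ be Lebesgue measurable and let $\mathbf{a}\in\mathbb{R}^d$ satisfy $\Lambda_{\mathbb{M}}(\mathbf{a})>0$. Then there exist $c>0$ and $\epsilon>0$ such that $\Lambda_{\mathbb{M}}(\lambda\mathbf{a})\ge c\lambda$ for all $0<\lambda<\epsilon$.
   Context: $\mathbb{T}^d=(\mathbb{R}/2\pi\mathbb{Z})^d$ with Lebesgue measure $|\cdot|$. For $\mathbf{a}\in\mathbb{R}^d$, $\mathbb{M}+\mathbf{a}$ is the translate of $\mathbb{M}$ (mod $2\pi$ in each coordinate), and $\Lambda_{\mathbb{M}}(\mathbf{a})=|\mathbb{M}\setminus(\mathbb{M}+\mathbf{a})|$. *)

theory Defs
  imports "HOL-Analysis.Analysis"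
begin

text \<open>The torus T^d = (R / 2 pi Z)^d is represented by the fundamental domain
  [0, 2 pi)^d inside real^'n (d = CARD('n)); Lebesgue measure on T^d is
  Lebesgue measure restricted to this cube.\<close>

definition torus :: "(real ^ 'n) set" where
  "torus = {x. \<forall>i. 0 \<le> x $ i \<and> x $ i < 2 * pi}"

definition wrap2pi :: "real \<Rightarrow> real" where
  "wrap2pi t = t - 2 * pi * of_int \<lfloor>t / (2 * pi)\<rfloor>"

definition torus_translate :: "(real ^ 'n) set \<Rightarrow> real ^ 'n \<Rightarrow> (real ^ 'n) set" where
  "torus_translate M a = (\<lambda>y. \<chi> i. wrap2pi (y $ i + a $ i)) ` M"

definition Lambda :: "(real ^ 'n) set \<Rightarrow> real ^ 'n \<Rightarrow> real" where
  "Lambda M a = measure lebesgue (M - torus_translate M a)"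

end

theory Submission
  imports Defs
begin

(* Lambda_M is subadditive, Lambda_M(x + y) <= Lambda_M(x) + Lambda_M(y),
   because translation on the torus does not increase the measure of subsets of the torus and
   M \ (M + x + y) is covered by (M \ (M + y)) and ((M \ (M + x)) + y).  Hence
   Lambda_M(n x) <= n Lambda_M(x).  Moreover Lambda_M(x) -> 0 as x -> 0: approximate M from
   inside by a compact set K in the open cube; small torus translates of K are ordinary
   translates, and |K \ (K + x)| is small by outer regularity.  Given t small, write
   a = n (t a) + r a with n = floor(1/t) and 0 <= r < t; then
   Lambda_M(a) <= n Lambda_M(t a) + Lambda_M(r a) with Lambda_M(r a) < Lambda_M(a)/2,
   so Lambda_M(t a) >= Lambda_M(a)/(2n) >= (Lambda_M(a)/2) t. *)

lemma wrap2pi_bounds: "0 \<le> wrap2pi t" "wrap2pi t < 2 * pi"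
proof -
  have "of_int \<lfloor>t / (2*pi)\<rfloor> \<le> t / (2*pi)" "t / (2*pi) < of_int \<lfloor>t / (2*pi)\<rfloor> + 1"
    by linarith+
  then have "2*pi * of_int \<lfloor>t / (2*pi)\<rfloor> \<le> 2*pi * (t / (2*pi))"
      "2*pi * (t / (2*pi)) < 2*pi * (of_int \<lfloor>t / (2*pi)\<rfloor> + 1)"
    by (intro mult_left_mono mult_strict_left_mono; simp)+
  then show "0 \<le> wrap2pi t" "wrap2pi t < 2 * pi"
    by (simp_all add: wrap2pi_def algebra_simps)
qed

lemma wrap2pi_id: "0 \<le> t \<Longrightarrow> t < 2 * pi \<Longrightarrow> wrap2pi t = t"
proof -
  assume "0 \<le> t" "t < 2 * pi"
  then have "\<lfloor>t / (2*pi)\<rfloor> = 0" by (simp add: floor_eq_iff field_simps)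
  then show ?thesis by (simp add: wrap2pi_def)
qed

lemma wrap2pi_periodic: "wrap2pi (t + 2 * pi * of_int k) = wrap2pi t"
proof -
  have "(t + 2*pi * of_int k) / (2*pi) = t / (2*pi) + of_int k" by (simp add: field_simps)
  then show ?thesis by (simp add: wrap2pi_def algebra_simps)
qed

lemma wrap2pi_add_wrap: "wrap2pi (wrap2pi u + v) = wrap2pi (u + v)"
proof -
  have "wrap2pi u + v = (u + v) + 2*pi * of_int (- \<lfloor>u / (2*pi)\<rfloor>)" by (simp add: wrap2pi_def)
  then show ?thesis by (simp only: wrap2pi_periodic)
qed

lemma wrap2pi_add_inj:
  assumes "0 \<le> y" "y < 2 * pi" "0 \<le> z" "z < 2 * pi" "wrap2pi (y + x) = wrap2pi (z + x)"
  shows "y = z"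
proof -
  define m where "m = \<lfloor>(y + x) / (2*pi)\<rfloor> - \<lfloor>(z + x) / (2*pi)\<rfloor>"
  have diff: "y - z = 2*pi * of_int m" using assms(5) by (simp add: wrap2pi_def m_def algebra_simps)
  then have "\<bar>2*pi * of_int m\<bar> < 2*pi" using assms(1-4) by linarith
  then have "m = 0" by (simp add: abs_mult)
  then show ?thesis using diff by simp
qed

lemma wrap2pi_add_cases:
  assumes "0 \<le> y" "y < 2 * pi" "0 \<le> x" "x < 2 * pi"
  shows "wrap2pi (y + x) = (if 2 * pi \<le> y + x then y + x - 2 * pi else y + x)"
proof (cases "2 * pi \<le> y + x")
  case True
  have "wrap2pi (y + x) = wrap2pi ((y + x - 2*pi) + 2*pi * of_int (1::int))" by simp
  also have "\<dots> = y + x - 2*pi" using assms True by (simp only: wrap2pi_periodic wrap2pi_id)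
  finally show ?thesis using True by simp
qed (use assms in \<open>simp add: wrap2pi_id\<close>)

lemma closed_in_lebesgue: "closed S \<Longrightarrow> S \<in> sets lebesgue"
  by (metis borel_closed sets_completionI_sets sets_lborel)

lemma open_in_lebesgue: "open S \<Longrightarrow> S \<in> sets lebesgue"
  by (metis borel_open sets_completionI_sets sets_lborel)

lemma torus_subset_cbox: "torus \<subseteq> cbox (0::real^'n) (\<chi> i. 2 * pi)"
  by (fastforce simp: torus_def mem_box_cart less_imp_le)

lemma box_subset_torus: "box (0::real^'n) (\<chi> i. 2 * pi) \<subseteq> torus"
  by (auto simp: torus_def mem_box_cart less_imp_le)

lemma negligible_torus_minus_box: "negligible (torus - box (0::real^'n) (\<chi> i. 2 * pi))"
  by (rule negligible_subset[OF negligible_frontier_interval]) (use torus_subset_cbox in auto)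

lemma torus_lmeasurable: "(torus :: (real^'n) set) \<in> lmeasurable"
proof -
  have eq: "(torus :: (real^'n) set) = (\<Inter>i. {x. 0 \<le> x$i}) \<inter> (\<Inter>i. {x. x$i < 2*pi})"
    by (auto simp: torus_def)
  have "closed (\<Inter>i. {x::real^'n. 0 \<le> x$i})" "open (\<Inter>i. {x::real^'n. x$i < 2*pi})"
    by (auto intro!: closed_INT open_INT
        simp: closed_halfspace_component_ge_cart open_halfspace_component_lt_cart)
  then have "(torus :: (real^'n) set) \<in> sets lebesgue"
    unfolding eq by (intro sets.Int closed_in_lebesgue open_in_lebesgue)
  then show ?thesis by (meson fmeasurableI2 lmeasurable_cbox torus_subset_cbox)
qed

lemma lmeasurable_in_torus: "A \<subseteq> torus \<Longrightarrow> A \<in> sets lebesgue \<Longrightarrow> A \<in> lmeasurable"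
  by (rule fmeasurableI2[OF torus_lmeasurable])

lemma torus_translate_subset_torus: "torus_translate A x \<subseteq> torus"
  by (auto simp: torus_translate_def torus_def wrap2pi_bounds)

lemma torus_translate_translate:
  "torus_translate (torus_translate A y) x = torus_translate A (x + y)"
  unfolding torus_translate_def image_image
  by (rule image_cong[OF refl]) (simp add: vec_eq_iff wrap2pi_add_wrap add.assoc add.commute[of "y $ _"])

lemma torus_translate_zero:
  fixes A :: "(real^'n) set"
  assumes "A \<subseteq> torus"
  shows "torus_translate A 0 = A"
proof -
  have "(\<lambda>y::real^'n. \<chi> i. wrap2pi (y$i + 0$i)) ` A = id ` A"
    using assms by (intro image_cong) (auto simp: vec_eq_iff wrap2pi_id torus_def)
  then show ?thesis by (simp add: torus_translate_def)
qed

lemma torus_translate_mono: "A \<subseteq> B \<Longrightarrow> torus_translate A x \<subseteq> torus_translate B x"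
  unfolding torus_translate_def by auto

lemma torus_translate_map_inj: "inj_on (\<lambda>y::real^'n. \<chi> i. wrap2pi (y$i + x$i)) torus"
proof (rule inj_onI)
  fix y z :: "real^'n"
  assume "y \<in> torus" "z \<in> torus" "(\<chi> i. wrap2pi (y$i + x$i)) = (\<chi> i. wrap2pi (z$i + x$i))"
  then show "y = z"
    by (auto simp: vec_eq_iff torus_def intro: wrap2pi_add_inj)
qed

lemma torus_translate_diff:
  "A \<subseteq> torus \<Longrightarrow> B \<subseteq> torus \<Longrightarrow>
   torus_translate (A - B) x = torus_translate A x - torus_translate B x"
  unfolding torus_translate_def by (rule inj_on_image_set_diff[OF torus_translate_map_inj]) auto

lemma torus_translate_eq_translation:
  assumes "(+) x ` K \<subseteq> torus"
  shows "torus_translate K x = (+) x ` K"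
  unfolding torus_translate_def
proof (rule image_cong[OF refl])
  fix k assume "k \<in> K"
  then have "x + k \<in> torus" using assms by blast
  then show "(\<chi> i. wrap2pi (k$i + x$i)) = x + k"
    by (auto simp: vec_eq_iff torus_def wrap2pi_id add.commute)
qed

section \<open>Torus translation is a piecewise Euclidean translation\<close>

text \<open>For a shift x, the torus splits into 2^d regions, indexed by the set S of coordinates
  that wrap around; on the region of S the torus translation is the Euclidean translation
  by the vector below.\<close>
definition wrap_region :: "real^'n \<Rightarrow> 'n set \<Rightarrow> (real^'n) set" where
  "wrap_region x S = {y. \<forall>i. (i \<in> S) = (2 * pi \<le> y$i + wrap2pi (x$i))}"

definition wrap_shift :: "real^'n \<Rightarrow> 'n set \<Rightarrow> real^'n" where
  "wrap_shift x S = (\<chi> i. wrap2pi (x$i) - (if i \<in> S then 2 * pi else 0))"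

lemma wrap_region_unique: "y \<in> wrap_region x S \<Longrightarrow> y \<in> wrap_region x T \<Longrightarrow> S = T"
  by (auto simp: wrap_region_def)

lemma in_wrap_region: "y \<in> wrap_region x {i. 2 * pi \<le> y$i + wrap2pi (x$i)}"
  by (simp add: wrap_region_def)

lemma wrap_region_measurable:
  fixes x :: "real^'n"
  shows "wrap_region x S \<in> sets lebesgue"
proof -
  have eq: "wrap_region x S = (\<Inter>i\<in>S. {y::real^'n. 2*pi - wrap2pi (x$i) \<le> y$i})
                             \<inter> (\<Inter>i\<in>-S. {y::real^'n. y$i < 2*pi - wrap2pi (x$i)})"
    by (auto simp: wrap_region_def) (smt (verit) ComplI)+
  have "closed (\<Inter>i\<in>S. {y::real^'n. 2*pi - wrap2pi (x$i) \<le> y$i})"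
       "open (\<Inter>i\<in>-S. {y::real^'n. y$i < 2*pi - wrap2pi (x$i)})"
    by (auto intro!: closed_INT open_INT
        simp: closed_halfspace_component_ge_cart open_halfspace_component_lt_cart)
  then show ?thesis unfolding eq by (intro sets.Int closed_in_lebesgue open_in_lebesgue)
qed

lemma torus_translate_on_region:
  assumes "y \<in> torus" "y \<in> wrap_region x S"
  shows "(\<chi> i. wrap2pi (y$i + x$i)) = wrap_shift x S + y"
proof -
  have "wrap2pi (y$i + x$i) = wrap2pi (y$i + wrap2pi (x$i))" for i
    using wrap2pi_add_wrap[of "x$i" "y$i"] by (simp add: add.commute)
  moreover have "wrap2pi (y$i + wrap2pi (x$i))
      = (if 2*pi \<le> y$i + wrap2pi (x$i) then y$i + wrap2pi (x$i) - 2*pi else y$i + wrap2pi (x$i))" for i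
    using assms(1) by (intro wrap2pi_add_cases) (auto simp: torus_def wrap2pi_bounds)
  ultimately show ?thesis
    using assms(2) by (auto simp: vec_eq_iff wrap_region_def wrap_shift_def)
qed

lemma torus_translate_piecewise:
  assumes "A \<subseteq> torus"
  shows "torus_translate A x = (\<Union>S. (+) (wrap_shift x S) ` (A \<inter> wrap_region x S))"
proof -
  have "(\<chi> i. wrap2pi (y$i + x$i)) \<in> (\<Union>S. (+) (wrap_shift x S) ` (A \<inter> wrap_region x S))"
    if "y \<in> A" for y
  proof -
    define S where "S = {i. 2 * pi \<le> y$i + wrap2pi (x$i)}"
    have "y \<in> A \<inter> wrap_region x S" using that in_wrap_region unfolding S_def by blast
    moreover have "(\<chi> i. wrap2pi (y$i + x$i)) = wrap_shift x S + y"
      using that assms in_wrap_region unfolding S_def by (intro torus_translate_on_region) auto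
    ultimately show ?thesis by blast
  qed
  moreover have "wrap_shift x S + y \<in> torus_translate A x" if "y \<in> A" "y \<in> wrap_region x S" for y S
  proof -
    have "wrap_shift x S + y = (\<chi> i. wrap2pi (y$i + x$i))"
      using that assms by (intro torus_translate_on_region[symmetric]) auto
    then show ?thesis unfolding torus_translate_def by (rule image_eqI[OF _ that(1)])
  qed
  ultimately show ?thesis by (auto simp: torus_translate_def)
qed

text \<open>Consequently torus translates of measurable subsets of the torus are measurable and
  have no larger measure (they actually have the same measure, but this suffices).\<close>
lemma torus_translate_measure:
  fixes A :: "(real^'n) set"
  assumes A: "A \<subseteq> torus" "A \<in> sets lebesgue"
  shows "torus_translate A x \<in> lmeasurable"
    and "measure lebesgue (torus_translate A x) \<le> measure lebesgue A"
proof -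
  have piece: "A \<inter> wrap_region x S \<in> lmeasurable" for S
    using A wrap_region_measurable by (intro lmeasurable_in_torus) auto
  then have moved: "(+) (wrap_shift x S) ` (A \<inter> wrap_region x S) \<in> lmeasurable" for S
    by (intro measurable_translation)
  show "torus_translate A x \<in> lmeasurable"
    unfolding torus_translate_piecewise[OF A(1)] by (intro fmeasurable.finite_UN moved) auto
  have "measure lebesgue (torus_translate A x)
      \<le> (\<Sum>S\<in>UNIV. measure lebesgue ((+) (wrap_shift x S) ` (A \<inter> wrap_region x S)))"
    unfolding torus_translate_piecewise[OF A(1)]
    by (intro measure_UNION_le) (auto intro: fmeasurableD moved)
  also have "\<dots> = (\<Sum>S\<in>UNIV. measure lebesgue (A \<inter> wrap_region x S))"
    by (simp only: measure_translation)
  also have "\<dots> = measure lebesgue (\<Union>S. A \<inter> wrap_region x S)"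
    using wrap_region_unique
    by (intro measure_UNION'[symmetric]) (auto simp: piece pairwise_def disjnt_def)
  also have "(\<Union>S. A \<inter> wrap_region x S) = A" using in_wrap_region by blast
  finally show "measure lebesgue (torus_translate A x) \<le> measure lebesgue A" .
qed

section \<open>Subadditivity of Lambda\<close>

lemma Lambda_nonneg: "Lambda M x \<ge> 0"
  by (simp add: Lambda_def)

lemma Lambda_zero: "M \<subseteq> torus \<Longrightarrow> Lambda M 0 = 0"
  by (simp add: Lambda_def torus_translate_zero)

text \<open>M \ (M + x + y) lies in (M \ (M + y)) together with (M \ (M + x)) + y.\<close>
lemma Lambda_add:
  fixes M :: "(real^'n) set"
  assumes M: "M \<subseteq> torus" "M \<in> sets lebesgue"
  shows "Lambda M (x + y) \<le> Lambda M x + Lambda M y"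
proof -
  have meas: "torus_translate M z \<in> sets lebesgue" for z
    using torus_translate_measure(1)[OF M] by (rule fmeasurableD)
  have "torus_translate (M - torus_translate M x) y
      = torus_translate M y - torus_translate (torus_translate M x) y"
    using M(1) torus_translate_subset_torus by (intro torus_translate_diff)
  then have shifted: "torus_translate M y - torus_translate M (x + y)
                    = torus_translate (M - torus_translate M x) y"
    by (simp add: torus_translate_translate add.commute)
  have "Lambda M (x + y) \<le> measure lebesgue ((M - torus_translate M y)
                             \<union> (torus_translate M y - torus_translate M (x + y)))"
    unfolding Lambda_def using M meas torus_translate_subset_torus[of M y]
    by (intro measure_mono_fmeasurable) (auto intro!: lmeasurable_in_torus)
  also have "\<dots> \<le> Lambda M y + measure lebesgue (torus_translate M y - torus_translate M (x + y))"
    unfolding Lambda_def using M meas by (intro measure_Un_le) auto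
  also have "measure lebesgue (torus_translate M y - torus_translate M (x + y)) \<le> Lambda M x"
    unfolding shifted Lambda_def using M meas by (intro torus_translate_measure(2)) auto
  finally show ?thesis by simp
qed

lemma Lambda_scaleR_nat:
  fixes M :: "(real^'n) set"
  assumes M: "M \<subseteq> torus" "M \<in> sets lebesgue"
  shows "Lambda M (real n *\<^sub>R x) \<le> real n * Lambda M x"
proof (induction n)
  case 0
  then show ?case using Lambda_zero[OF M(1)] by simp
next
  case (Suc n)
  have "Lambda M (real (Suc n) *\<^sub>R x) = Lambda M (x + real n *\<^sub>R x)"
    by (simp add: algebra_simps)
  also have "\<dots> \<le> Lambda M x + Lambda M (real n *\<^sub>R x)" by (rule Lambda_add[OF M])
  also have "\<dots> \<le> Lambda M x + real n * Lambda M x" using Suc by simp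
  finally show ?case by (simp add: algebra_simps)
qed

section \<open>Continuity of Lambda at the origin\<close>

lemma compact_approx_in_box:
  fixes M :: "(real^'n) set"
  assumes M: "M \<subseteq> torus" "M \<in> sets lebesgue" and e: "e > 0"
  obtains K where "compact K" "K \<subseteq> M" "K \<subseteq> box 0 (\<chi> i. 2 * pi)" "measure lebesgue (M - K) < e"
proof -
  define B :: "(real^'n) set" where "B = box 0 (\<chi> i. 2 * pi)"
  have MB: "M \<inter> B \<in> sets lebesgue"
    unfolding B_def by (intro sets.Int M(2) open_in_lebesgue open_box)
  obtain K where K: "closed K" "K \<subseteq> M \<inter> B" "M \<inter> B - K \<in> lmeasurable"
      "emeasure lebesgue (M \<inter> B - K) < ennreal e"
    using sets_lebesgue_inner_closed[OF MB e] by blast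
  have "compact K" using K(1,2) unfolding B_def
    by (meson bounded_box bounded_subset compact_eq_bounded_closed le_inf_iff)
  then have Kl: "K \<in> sets lebesgue" by (simp add: closed_in_lebesgue compact_imp_closed)
  have null: "measure lebesgue (torus - B) = 0"
    unfolding B_def by (intro negligible_imp_measure0 negligible_torus_minus_box)
  have tB: "torus - B \<in> lmeasurable"
    unfolding B_def by (intro negligible_imp_measurable negligible_torus_minus_box)
  have "measure lebesgue (M - K) \<le> measure lebesgue ((M \<inter> B - K) \<union> (torus - B))"
    using M K(3) Kl tB by (intro measure_mono_fmeasurable) auto
  also have "\<dots> \<le> measure lebesgue (M \<inter> B - K) + measure lebesgue (torus - B)"
    using K(3) tB by (intro measure_Un_le) auto
  also have "\<dots> < e" using K(3,4) null by (simp add: emeasure_eq_measure2 ennreal_less_iff)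
  finally show ?thesis using that \<open>compact K\<close> K(2) unfolding B_def by blast
qed

lemma measure_diff_translation:
  fixes K :: "(real^'n) set"
  assumes K: "K \<in> lmeasurable"
  shows "measure lebesgue (K - (+) x ` K) = measure lebesgue ((+) x ` K - K)"
proof -
  have Kx: "(+) x ` K \<in> lmeasurable" using K by (rule measurable_translation)
  have KKx: "K \<inter> (+) x ` K \<in> sets lebesgue" using K Kx by (intro sets.Int fmeasurableD)
  have "K - (+) x ` K = K - (K \<inter> (+) x ` K)" by blast
  then have "measure lebesgue (K - (+) x ` K) = measure lebesgue (K - (K \<inter> (+) x ` K))"
    by simp
  also have "\<dots> = measure lebesgue K - measure lebesgue (K \<inter> (+) x ` K)"
    using K KKx by (intro measure_Diff) (auto simp: fmeasurable_def)
  also have "\<dots> = measure lebesgue ((+) x ` K) - measure lebesgue (K \<inter> (+) x ` K)"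
    by (simp add: measure_translation)
  also have "\<dots> = measure lebesgue ((+) x ` K - (K \<inter> (+) x ` K))"
    using Kx KKx by (intro measure_Diff[symmetric]) (auto simp: fmeasurable_def)
  also have "(+) x ` K - (K \<inter> (+) x ` K) = (+) x ` K - K" by blast
  finally show ?thesis .
qed

lemma small_translates_in_open:
  fixes K :: "'a::real_normed_vector set"
  assumes "compact K" "open U" "K \<subseteq> U"
  obtains d where "d > 0" "\<And>x. norm x < d \<Longrightarrow> (+) x ` K \<subseteq> U"
proof -
  obtain d where d: "d > 0" "(\<Union>k\<in>K. ball k d) \<subseteq> U"
    using compact_subset_open_imp_ball_epsilon_subset[OF assms] by blast
  have "(+) x ` K \<subseteq> U" if "norm x < d" for x
  proof
    fix z assume "z \<in> (+) x ` K"
    then obtain k where k: "k \<in> K" "z = x + k" by blast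
    have "x + k \<in> ball k d" using that by (simp add: dist_norm)
    then show "z \<in> U" using d(2) k by blast
  qed
  then show ?thesis using that d(1) by blast
qed

text \<open>Lambda_M is controlled by an inner approximation K of M: points of M missing from
  M + x lie in M \ K or in K \ (K + x).\<close>
lemma Lambda_le_inner_approx:
  fixes M :: "(real^'n) set"
  assumes M: "M \<subseteq> torus" "M \<in> sets lebesgue" and K: "K \<subseteq> M" "K \<in> sets lebesgue"
  shows "Lambda M x \<le> measure lebesgue (M - K) + measure lebesgue (K - torus_translate K x)"
proof -
  have TK: "torus_translate K x \<in> sets lebesgue" "torus_translate M x \<in> sets lebesgue"
    using K M by (auto intro!: fmeasurableD torus_translate_measure(1))
  have "M - torus_translate M x \<subseteq> (M - K) \<union> (K - torus_translate K x)"
    using torus_translate_mono[OF K(1)] by blast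
  then have "Lambda M x \<le> measure lebesgue ((M - K) \<union> (K - torus_translate K x))"
    unfolding Lambda_def using M K TK by (intro measure_mono_fmeasurable) (auto intro!: lmeasurable_in_torus)
  also have "\<dots> \<le> measure lebesgue (M - K) + measure lebesgue (K - torus_translate K x)"
    using M K TK by (intro measure_Un_le) auto
  finally show ?thesis .
qed

lemma Lambda_tendsto_zero:
  fixes M :: "(real^'n) set"
  assumes M: "M \<subseteq> torus" "M \<in> sets lebesgue" and e: "e > 0"
  obtains d where "d > 0" "\<And>x. norm x < d \<Longrightarrow> Lambda M x < e"
proof -
  have e2: "e/2 > 0" using e by simp
  obtain K where K: "compact K" "K \<subseteq> M" "K \<subseteq> box 0 (\<chi> i. 2 * pi)"
      "measure lebesgue (M - K) < e/2"
    using compact_approx_in_box[OF M e2] .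
  have Kl: "K \<in> lmeasurable" using K(1) by (rule lmeasurable_compact)
  obtain U where U: "open U" "K \<subseteq> U" "U - K \<in> lmeasurable" "emeasure lebesgue (U - K) < ennreal (e/2)"
    using sets_lebesgue_outer_open[OF fmeasurableD[OF Kl] e2] by blast
  have "open (U \<inter> box 0 (\<chi> i. 2 * pi))" "K \<subseteq> U \<inter> box 0 (\<chi> i. 2 * pi)"
    using U(1,2) K(3) by auto
  then obtain d where d: "d > 0" "\<And>x. norm x < d \<Longrightarrow> (+) x ` K \<subseteq> U \<inter> box 0 (\<chi> i. 2 * pi)"
    using small_translates_in_open[OF K(1)] by metis
  have "Lambda M x < e" if x: "norm x < d" for x
  proof -
    have Kx: "(+) x ` K \<in> lmeasurable" using Kl by (rule measurable_translation)
    have "torus_translate K x = (+) x ` K"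
      using d(2)[OF x] box_subset_torus by (intro torus_translate_eq_translation) blast
    then have "measure lebesgue (K - torus_translate K x) = measure lebesgue ((+) x ` K - K)"
      using Kl by (simp add: measure_diff_translation)
    also have "\<dots> \<le> measure lebesgue (U - K)"
      using d(2)[OF x] U(3) Kx Kl by (intro measure_mono_fmeasurable) (auto intro: fmeasurableD)
    also have "\<dots> < e/2" using U(3,4) by (simp add: emeasure_eq_measure2 ennreal_less_iff)
    finally show ?thesis
      using Lambda_le_inner_approx[OF M K(2) fmeasurableD[OF Kl], of x] K(4) by linarith
  qed
  then show ?thesis using that d(1) by blast
qed

lemma one_divmod:
  fixes t :: real
  assumes "t > 0"
  obtains n :: nat and r where "1 = real n * t + r" "0 \<le> r" "r < t"
proof -
  define n where "n = nat \<lfloor>1 / t\<rfloor>"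
  have "0 \<le> \<lfloor>1 / t\<rfloor>" using assms by simp
  then have "real n \<le> 1 / t" "1 / t < real n + 1" by (simp_all add: n_def)
  then have "real n * t \<le> 1" "1 < (real n + 1) * t" using assms by (simp_all add: field_simps)
  then show ?thesis using that[of n "1 - real n * t"] by (simp add: algebra_simps)
qed

text \<open>The core estimate: if Lambda_M is at most Lambda_M(a)/2 on the segment of multiples
  r a with 0 <= r < t, then splitting a into floor(1/t) copies of t a plus a short remainder
  and using subadditivity gives Lambda_M(t a) >= (Lambda_M(a)/2) t.\<close>
lemma Lambda_lower_bound_at_scale:
  fixes M :: "(real^'n) set"
  assumes M: "M \<subseteq> torus" "M \<in> sets lebesgue" and t: "t > 0"
    and small: "\<And>r. 0 \<le> r \<Longrightarrow> r < t \<Longrightarrow> Lambda M (r *\<^sub>R a) \<le> Lambda M a / 2"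
  shows "Lambda M a / 2 * t \<le> Lambda M (t *\<^sub>R a)"
proof -
  obtain n :: nat and r where nr: "1 = real n * t + r" "0 \<le> r" "r < t"
    using one_divmod[OF t] .
  have "a = real n *\<^sub>R (t *\<^sub>R a) + r *\<^sub>R a"
    using nr(1) by (metis scaleR_add_left scaleR_one scaleR_scaleR)
  then have "Lambda M a \<le> Lambda M (real n *\<^sub>R (t *\<^sub>R a)) + Lambda M (r *\<^sub>R a)"
    using Lambda_add[OF M] by metis
  also have "\<dots> \<le> real n * Lambda M (t *\<^sub>R a) + Lambda M a / 2"
    by (rule add_mono[OF Lambda_scaleR_nat[OF M] small[OF nr(2,3)]])
  finally have "Lambda M a / 2 * t \<le> (real n * t) * Lambda M (t *\<^sub>R a)"
    using t by (simp add: algebra_simps mult_right_mono)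
  also have "\<dots> \<le> Lambda M (t *\<^sub>R a)"
    using nr Lambda_nonneg[of M "t *\<^sub>R a"] by (intro mult_left_le_one_le) auto
  finally show ?thesis .
qed

theorem mainTheorem5:
  fixes M :: "(real ^ 'n) set" and a :: "real ^ 'n"
  assumes "M \<subseteq> torus" and "M \<in> sets lebesgue"
    and "Lambda M a > 0"
  shows "\<exists>c>0. \<exists>\<epsilon>>0. \<forall>t::real. 0 < t \<and> t < \<epsilon> \<longrightarrow> Lambda M (t *\<^sub>R a) \<ge> c * t"
proof -
  note M = assms(1,2)
  obtain d where d: "d > 0" "\<And>x. norm x < d \<Longrightarrow> Lambda M x < Lambda M a / 2"
    using Lambda_tendsto_zero[OF M, of "Lambda M a / 2"] assms(3) by auto
  have norm_pos: "norm a + 1 > 0" using norm_ge_zero[of a] by linarith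
  define \<epsilon> where "\<epsilon> = d / (norm a + 1)"
  have "\<epsilon> > 0" using d(1) norm_pos by (simp add: \<epsilon>_def)
  have "Lambda M a / 2 * t \<le> Lambda M (t *\<^sub>R a)" if "0 < t" "t < \<epsilon>" for t
  proof (rule Lambda_lower_bound_at_scale[OF M \<open>0 < t\<close>])
    fix r :: real assume "0 \<le> r" "r < t"
    then have "norm (r *\<^sub>R a) \<le> \<epsilon> * norm a" using \<open>t < \<epsilon>\<close> by (simp add: mult_right_mono)
    also have "\<dots> < \<epsilon> * (norm a + 1)" using \<open>\<epsilon> > 0\<close> by simp
    also have "\<dots> = d" unfolding \<epsilon>_def using norm_pos by simp
    finally show "Lambda M (r *\<^sub>R a) \<le> Lambda M a / 2" using d(2) by fastforce
  qed
  then show ?thesis using assms(3) \<open>\<epsilon> > 0\<close> by (metis half_gt_zero)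
qed

end
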